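(* Let $\pi_2$ be the five-dimensional complex associative algebra with basis $e_1,\dots,e_5$ and nonzero products $e_1e_1=e_2$, $e_1e_2=e_2e_1=e_3$, $e_1e_4=e_4e_1=e_5$, $e_4e_4=e_5$ (all other products of basis elements are zero). The vector space $LocDer(\pi_2)$ of all local derivations of $\pi_2$ is a Lie algebra with respect to the bracket $[\nabla,\Delta]=\nabla\Delta-\Delta\nabla$; that is, $[\nabla,\Delta]\in LocDer(\pi_2)$ for all $\nabla,\Delta\in LocDer(\pi_2)$.
   Context: A derivation of an algebra $A$ is a linear map $D$ with $D(xy)=D(x)y+xD(y)$ for all $x,y\in A$. A linear map $\nabla:A\to A$ is a local derivation if for every $x\in A$ there is a derivation $D_x$ of $A$ (depending on $x$) with $\nabla(x)=D_x(x)$. *)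

theory Defs
  imports Complex_Main "HOL-Library.Function_Algebras"
begin

datatype idx = E1 | E2 | E3 | E4 | E5

lemma UNIV_idx: "(UNIV :: idx set) = {E1, E2, E3, E4, E5}"
  using idx.exhaust by auto

instance idx :: finite
  by standard (simp add: UNIV_idx)

type_synonym pi2 = "idx \<Rightarrow> complex"

definition basis_vec :: "idx \<Rightarrow> pi2" where
  "basis_vec i = (\<lambda>k. if k = i then 1 else 0)"

fun basis_prod :: "idx \<Rightarrow> idx \<Rightarrow> pi2" where
  "basis_prod E1 E1 = basis_vec E2"
| "basis_prod E1 E2 = basis_vec E3"
| "basis_prod E2 E1 = basis_vec E3"
| "basis_prod E1 E4 = basis_vec E5"
| "basis_prod E4 E1 = basis_vec E5"
| "basis_prod E4 E4 = basis_vec E5"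
| "basis_prod _ _ = (\<lambda>k. 0)"

definition pi2_mult :: "pi2 \<Rightarrow> pi2 \<Rightarrow> pi2" where
  "pi2_mult x y = (\<lambda>k. \<Sum>i\<in>UNIV. \<Sum>j\<in>UNIV. x i * y j * basis_prod i j k)"

definition clinear_pi2 :: "(pi2 \<Rightarrow> pi2) \<Rightarrow> bool" where
  "clinear_pi2 f \<longleftrightarrow> (\<forall>x y. f (x + y) = f x + f y)
      \<and> (\<forall>(c::complex) x. f (\<lambda>i. c * x i) = (\<lambda>i. c * f x i))"

definition derivation_pi2 :: "(pi2 \<Rightarrow> pi2) \<Rightarrow> bool" where
  "derivation_pi2 D \<longleftrightarrow> clinear_pi2 D
      \<and> (\<forall>x y. D (pi2_mult x y) = pi2_mult (D x) y + pi2_mult x (D y))"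

definition local_derivation_pi2 :: "(pi2 \<Rightarrow> pi2) \<Rightarrow> bool" where
  "local_derivation_pi2 N \<longleftrightarrow> clinear_pi2 N
      \<and> (\<forall>x. \<exists>D. derivation_pi2 D \<and> N x = D x)"

end

theory Submission
  imports Defs
begin

text \<open>
  The derivations of \<open>\<pi>\<^sub>2\<close> form a seven-parameter family, determined by their values
  at the generators \<open>e\<^sub>1\<close> and \<open>e\<^sub>4\<close>. Evaluating this family at \<open>e\<^sub>2, \<dots>, e\<^sub>5, e\<^sub>1 - e\<^sub>4, e\<^sub>2 - e\<^sub>5\<close>
  shows that the matrix \<open>(n\<^sub>k\<^sub>j) = (N e\<^sub>j)\<^sub>k\<close> of a local derivation has \<open>n\<^sub>k\<^sub>j = 0\<close> unless
  \<open>j \<preceq> k\<close> for the order \<open>1 \<prec> 2, 4 \<prec> 3, 5\<close>, and satisfies \<open>n\<^sub>4\<^sub>4 = n\<^sub>1\<^sub>1 + n\<^sub>4\<^sub>1\<close>,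
  \<open>n\<^sub>5\<^sub>5 = n\<^sub>2\<^sub>2 + n\<^sub>5\<^sub>2\<close>; conversely, for every such matrix and every point \<open>x\<close> a small
  triangular system yields a derivation agreeing with it at \<open>x\<close>. Matrices supported on the
  order form an incidence algebra, so the commutator keeps the zero pattern and has zero
  diagonal; the two diagonal relations then read \<open>[N, M]\<^sub>4\<^sub>1 = [N, M]\<^sub>5\<^sub>2 = 0\<close>, and indeed
  \<open>[N, M]\<^sub>4\<^sub>1 = n\<^sub>4\<^sub>1 (m\<^sub>1\<^sub>1 - m\<^sub>4\<^sub>4) + m\<^sub>4\<^sub>1 (n\<^sub>4\<^sub>4 - n\<^sub>1\<^sub>1) = 0\<close>, and likewise for \<open>[N, M]\<^sub>5\<^sub>2\<close>.
\<close>

abbreviation e :: "idx \<Rightarrow> pi2" where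
  "e \<equiv> basis_vec"

lemma all_idx: "(\<forall>k. P k) \<longleftrightarrow> P E1 \<and> P E2 \<and> P E3 \<and> P E4 \<and> P E5"
  by (auto intro: idx.induct)

lemma basis_vec_apply: "basis_vec i k = (if k = i then 1 else 0)"
  by (simp add: basis_vec_def)

lemma pi2_mult_eq:
  "pi2_mult x y = (\<lambda>k. case k of
      E1 \<Rightarrow> 0
    | E2 \<Rightarrow> x E1 * y E1
    | E3 \<Rightarrow> x E1 * y E2 + x E2 * y E1
    | E4 \<Rightarrow> 0
    | E5 \<Rightarrow> x E1 * y E4 + x E4 * y E1 + x E4 * y E4)"
  by (simp add: fun_eq_iff pi2_mult_def UNIV_idx basis_vec_apply split: idx.split)

lemma clinear_pi2_expand:
  assumes "clinear_pi2 f"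
  shows "f x k = x E1 * f (e E1) k + x E2 * f (e E2) k + x E3 * f (e E3) k
     + x E4 * f (e E4) k + x E5 * f (e E5) k"
proof -
  have add: "\<And>x y. f (x + y) = f x + f y"
    and scale: "\<And>c x. f (\<lambda>i. c * x i) = (\<lambda>i. c * f x i)"
    using assms unfolding clinear_pi2_def by blast+
  have "x = (\<lambda>i. x E1 * e E1 i) + (\<lambda>i. x E2 * e E2 i) + (\<lambda>i. x E3 * e E3 i)
     + (\<lambda>i. x E4 * e E4 i) + (\<lambda>i. x E5 * e E5 i)"
    by (simp add: fun_eq_iff all_idx basis_vec_apply)
  then have "f x = f ((\<lambda>i. x E1 * e E1 i) + (\<lambda>i. x E2 * e E2 i) + (\<lambda>i. x E3 * e E3 i)
     + (\<lambda>i. x E4 * e E4 i) + (\<lambda>i. x E5 * e E5 i))"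
    by (rule arg_cong)
  also have "\<dots> = (\<lambda>i. x E1 * f (e E1) i) + (\<lambda>i. x E2 * f (e E2) i) + (\<lambda>i. x E3 * f (e E3) i)
     + (\<lambda>i. x E4 * f (e E4) i) + (\<lambda>i. x E5 * f (e E5) i)"
    by (simp only: add scale)
  finally show ?thesis by simp
qed

lemma clinear_pi2_commutator:
  assumes "clinear_pi2 N" "clinear_pi2 M"
  shows "clinear_pi2 (\<lambda>x. N (M x) - M (N x))"
proof -
  have linear: "N (x + y) = N x + N y" "N (\<lambda>i. c * x i) = (\<lambda>i. c * N x i)"
    "M (x + y) = M x + M y" "M (\<lambda>i. c * x i) = (\<lambda>i. c * M x i)" for x y c
    using assms unfolding clinear_pi2_def by blast+
  show ?thesis
    unfolding clinear_pi2_def by (simp add: linear) (simp add: fun_eq_iff algebra_simps)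
qed

text \<open>\<open>a\<^sub>1, \<dots>, a\<^sub>5\<close> are the coordinates of \<open>D e\<^sub>1\<close>, and \<open>b\<^sub>3, b\<^sub>5\<close> the free coordinates of \<open>D e\<^sub>4\<close>.\<close>
definition der_pi2 ::
    "complex \<Rightarrow> complex \<Rightarrow> complex \<Rightarrow> complex \<Rightarrow> complex \<Rightarrow> complex \<Rightarrow> complex \<Rightarrow> pi2 \<Rightarrow> pi2" where
  "der_pi2 a1 a2 a3 a4 a5 b3 b5 x = (\<lambda>k. case k of
      E1 \<Rightarrow> a1 * x E1
    | E2 \<Rightarrow> a2 * x E1 + 2 * a1 * x E2
    | E3 \<Rightarrow> a3 * x E1 + 2 * a2 * x E2 + 3 * a1 * x E3 + b3 * x E4
    | E4 \<Rightarrow> a4 * x E1 + (a1 + a4) * x E4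
    | E5 \<Rightarrow> a5 * x E1 + 2 * a4 * x E2 + 2 * (a1 + a4) * x E5 + b5 * x E4)"

lemma derivation_pi2_der_pi2: "derivation_pi2 (der_pi2 a1 a2 a3 a4 a5 b3 b5)"
  unfolding derivation_pi2_def clinear_pi2_def
  by (simp add: fun_eq_iff der_pi2_def pi2_mult_eq algebra_simps split: idx.split)

lemma derivation_pi2_eq_der_pi2:
  assumes "derivation_pi2 D"
  shows "D = der_pi2 (D (e E1) E1) (D (e E1) E2) (D (e E1) E3) (D (e E1) E4) (D (e E1) E5)
    (D (e E4) E3) (D (e E4) E5)"
proof -
  have lin: "clinear_pi2 D"
    and leibniz: "\<And>x y. D (pi2_mult x y) = pi2_mult (D x) y + pi2_mult x (D y)"
    using assms unfolding derivation_pi2_def by blast+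
  have "pi2_mult (e E1) (e E1) = e E2" "pi2_mult (e E1) (e E2) = e E3"
    "pi2_mult (e E1) (e E4) = e E5" "pi2_mult (e E4) (e E4) = e E5"
    by (simp_all add: fun_eq_iff all_idx pi2_mult_eq basis_vec_apply)
  then have e2: "D (e E2) = pi2_mult (D (e E1)) (e E1) + pi2_mult (e E1) (D (e E1))"
    and e3: "D (e E3) = pi2_mult (D (e E1)) (e E2) + pi2_mult (e E1) (D (e E2))"
    and e5: "D (e E5) = pi2_mult (D (e E4)) (e E4) + pi2_mult (e E4) (D (e E4))"
    and e5': "D (e E5) = pi2_mult (D (e E1)) (e E4) + pi2_mult (e E1) (D (e E4))"
    using leibniz by metis+
  \<comment> \<open>\<open>e\<^sub>5\<close> is both \<open>e\<^sub>1 e\<^sub>4\<close> and \<open>e\<^sub>4 e\<^sub>4\<close>, which constrains \<open>D e\<^sub>4\<close>\<close>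
  have e4: "D (e E4) E1 = 0" "D (e E4) E2 = 0" "D (e E4) E4 = D (e E1) E1 + D (e E1) E4"
    using e5 e5' by (auto simp: fun_eq_iff all_idx pi2_mult_eq basis_vec_apply)
  show ?thesis
  proof (intro ext)
    fix x k
    show "D x k = der_pi2 (D (e E1) E1) (D (e E1) E2) (D (e E1) E3) (D (e E1) E4) (D (e E1) E5)
      (D (e E4) E3) (D (e E4) E5) x k"
      unfolding clinear_pi2_expand[OF lin, of x k] e3 e5 unfolding e2
      by (cases k) (simp_all add: e4 der_pi2_def pi2_mult_eq basis_vec_apply algebra_simps)
  qed
qed

lemma local_derivation_pi2_apply_eq_der_pi2:
  assumes "local_derivation_pi2 N"
  obtains a1 a2 a3 a4 a5 b3 b5 where "N x = der_pi2 a1 a2 a3 a4 a5 b3 b5 x"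
  using assms derivation_pi2_eq_der_pi2 unfolding local_derivation_pi2_def by metis

definition locder_matrix_pi2 :: "(pi2 \<Rightarrow> pi2) \<Rightarrow> bool" where
  "locder_matrix_pi2 N \<longleftrightarrow>
      N (e E2) E1 = 0 \<and> N (e E2) E4 = 0
    \<and> N (e E3) E1 = 0 \<and> N (e E3) E2 = 0 \<and> N (e E3) E4 = 0 \<and> N (e E3) E5 = 0
    \<and> N (e E4) E1 = 0 \<and> N (e E4) E2 = 0 \<and> N (e E4) E4 = N (e E1) E1 + N (e E1) E4
    \<and> N (e E5) E1 = 0 \<and> N (e E5) E2 = 0 \<and> N (e E5) E3 = 0 \<and> N (e E5) E4 = 0
    \<and> N (e E5) E5 = N (e E2) E2 + N (e E2) E5"

lemma local_derivation_pi2_imp_locder_matrix: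
  assumes "local_derivation_pi2 N"
  shows "locder_matrix_pi2 N"
proof -
  have lin: "clinear_pi2 N"
    using assms unfolding local_derivation_pi2_def by blast
  obtain a1 a2 a3 a4 a5 b3 b5 where e2: "N (e E2) = der_pi2 a1 a2 a3 a4 a5 b3 b5 (e E2)"
    using local_derivation_pi2_apply_eq_der_pi2[OF assms] .
  obtain a1 a2 a3 a4 a5 b3 b5 where e3: "N (e E3) = der_pi2 a1 a2 a3 a4 a5 b3 b5 (e E3)"
    using local_derivation_pi2_apply_eq_der_pi2[OF assms] .
  obtain a1 a2 a3 a4 a5 b3 b5 where e4: "N (e E4) = der_pi2 a1 a2 a3 a4 a5 b3 b5 (e E4)"
    using local_derivation_pi2_apply_eq_der_pi2[OF assms] .
  obtain a1 a2 a3 a4 a5 b3 b5 where e5: "N (e E5) = der_pi2 a1 a2 a3 a4 a5 b3 b5 (e E5)"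
    using local_derivation_pi2_apply_eq_der_pi2[OF assms] .
  obtain a1 a2 a3 a4 a5 b3 b5
    where e14: "N (e E1 - e E4) = der_pi2 a1 a2 a3 a4 a5 b3 b5 (e E1 - e E4)"
    using local_derivation_pi2_apply_eq_der_pi2[OF assms] .
  obtain a1 a2 a3 a4 a5 b3 b5
    where e25: "N (e E2 - e E5) = der_pi2 a1 a2 a3 a4 a5 b3 b5 (e E2 - e E5)"
    using local_derivation_pi2_apply_eq_der_pi2[OF assms] .
  have "N (e E1 - e E4) E1 + N (e E1 - e E4) E4 = 0"
    "N (e E2 - e E5) E2 + N (e E2 - e E5) E5 = 0"
    unfolding e14 e25 by (simp_all add: der_pi2_def basis_vec_apply)
  then show ?thesis
    unfolding locder_matrix_pi2_def e2 e3 e4 e5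
      clinear_pi2_expand[OF lin, of "e E1 - e E4"] clinear_pi2_expand[OF lin, of "e E2 - e E5"]
    by (simp add: der_pi2_def basis_vec_apply algebra_simps)
qed

lemma locder_matrix_pi2_commutator:
  assumes "clinear_pi2 N" "clinear_pi2 M" "locder_matrix_pi2 N" "locder_matrix_pi2 M"
  shows "locder_matrix_pi2 (\<lambda>x. N (M x) - M (N x))"
  using assms(3,4) unfolding locder_matrix_pi2_def
  by (simp add: clinear_pi2_expand[OF assms(1), of "M (e _)"]
      clinear_pi2_expand[OF assms(2), of "N (e _)"] algebra_simps)

lemma locder_matrix_pi2_apply:
  assumes "clinear_pi2 N" "locder_matrix_pi2 N"
  shows "N x E1 = x E1 * N (e E1) E1"
    "N x E2 = x E1 * N (e E1) E2 + x E2 * N (e E2) E2"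
    "N x E3 = x E1 * N (e E1) E3 + x E2 * N (e E2) E3 + x E3 * N (e E3) E3 + x E4 * N (e E4) E3"
    "N x E4 = x E1 * N (e E1) E4 + x E4 * (N (e E1) E1 + N (e E1) E4)"
    "N x E5 = x E1 * N (e E1) E5 + x E2 * N (e E2) E5 + x E4 * N (e E4) E5
      + x E5 * (N (e E2) E2 + N (e E2) E5)"
  using assms(2) unfolding locder_matrix_pi2_def clinear_pi2_expand[OF assms(1), of x] by simp_all

lemma locder_matrix_pi2_apply_eq_der_pi2:
  assumes "clinear_pi2 N" "locder_matrix_pi2 N"
  shows "\<exists>a1 a2 a3 a4 a5 b3 b5. N x = der_pi2 a1 a2 a3 a4 a5 b3 b5 x"
proof -
  note N_apply = locder_matrix_pi2_apply[OF assms, of x]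
  have solve: "\<exists>a. d = r + a * c" if "c \<noteq> 0" for c d r :: complex
    using that by (intro exI[of _ "(d - r) / c"]) simp
  consider "x E1 \<noteq> 0" | "x E1 = 0" "x E4 \<noteq> 0" | "x E1 = 0" "x E4 = 0" "x E2 \<noteq> 0"
    | "x E1 = 0" "x E4 = 0" "x E2 = 0"
    by blast
  then show ?thesis
  proof cases
    case 1
    define a1 a4 where "a1 = N (e E1) E1" and "a4 = N (e E1) E4"
    obtain a2 where a2: "N x E2 = 2 * a1 * x E2 + a2 * x E1"
      using solve[OF 1] by blast
    obtain a3 where a3: "N x E3 = 2 * a2 * x E2 + 3 * a1 * x E3 + a3 * x E1"
      using solve[OF 1] by blast
    obtain a5 where a5: "N x E5 = 2 * a4 * x E2 + 2 * (a1 + a4) * x E5 + a5 * x E1"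
      using solve[OF 1] by blast
    have "N x = der_pi2 a1 a2 a3 a4 a5 0 0 x"
      by (simp add: fun_eq_iff all_idx der_pi2_def N_apply(1,4) a1_def a4_def a2 a3 a5
          algebra_simps)
    then show ?thesis by blast
  next
    case 2
    define a1 a4 where "a1 = N (e E2) E2 / 2" and "a4 = N (e E1) E1 + N (e E1) E4 - a1"
    obtain b3 where b3: "N x E3 = 3 * a1 * x E3 + b3 * x E4"
      using solve[OF 2(2)] by blast
    obtain b5 where b5: "N x E5 = 2 * a4 * x E2 + 2 * (a1 + a4) * x E5 + b5 * x E4"
      using solve[OF 2(2)] by blast
    have "N x = der_pi2 a1 0 0 a4 0 b3 b5 x"
      using 2 by (simp add: fun_eq_iff all_idx der_pi2_def N_apply(1,2,4) a1_def a4_def b3 b5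
          algebra_simps)
    then show ?thesis by blast
  next
    case 3
    define a1 a4 where "a1 = N (e E2) E2 / 2" and "a4 = N (e E2) E5 / 2"
    obtain a2 where a2: "N x E3 = 3 * a1 * x E3 + a2 * (2 * x E2)"
      using solve[of "2 * x E2"] 3(3) by auto
    have "N x = der_pi2 a1 a2 0 a4 0 0 0 x"
      using 3 by (simp add: fun_eq_iff all_idx der_pi2_def N_apply(1,2,4,5) a1_def a4_def a2
          algebra_simps)
    then show ?thesis by blast
  next
    case 4
    define a1 a4 where "a1 = N (e E3) E3 / 3" and "a4 = (N (e E2) E2 + N (e E2) E5) / 2 - a1"
    have "N x = der_pi2 a1 0 0 a4 0 0 0 x"
      using 4 by (simp add: fun_eq_iff all_idx der_pi2_def N_apply a1_def a4_def algebra_simps)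
    then show ?thesis by blast
  qed
qed

lemma local_derivation_pi2_iff:
  "local_derivation_pi2 N \<longleftrightarrow> clinear_pi2 N \<and> locder_matrix_pi2 N"
proof
  assume "local_derivation_pi2 N"
  then show "clinear_pi2 N \<and> locder_matrix_pi2 N"
    using local_derivation_pi2_imp_locder_matrix local_derivation_pi2_def by blast
next
  assume "clinear_pi2 N \<and> locder_matrix_pi2 N"
  then show "local_derivation_pi2 N"
    unfolding local_derivation_pi2_def
    using locder_matrix_pi2_apply_eq_der_pi2 derivation_pi2_der_pi2 by metis
qed

theorem theorem6p2:
  assumes "local_derivation_pi2 N" and "local_derivation_pi2 M"
  shows "local_derivation_pi2 (\<lambda>x. N (M x) - M (N x))"
  using assms clinear_pi2_commutator locder_matrix_pi2_commutator
  by (simp add: local_derivation_pi2_iff)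

end
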